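(* Let $n$ be even, $1\le\kappa<n$ and $d\ge1$. Let $\mathcal{C}_1\subseteq\{0,1\}^n$ be a balanced binary code of length $n$ with minimum Hamming distance $d$ and of maximum size among such codes, and let $\mathcal{C}_2\subseteq\{0,1\}^n$ be a binary $\kappa$-WMU code of length $n$ with minimum Hamming distance $d$. Let $\mathcal{C}=\{\Psi(\mathbf{a},\mathbf{b}):\mathbf{a}\in\mathcal{C}_1,\mathbf{b}\in\mathcal{C}_2\}\subseteq\{\mathtt{A},\mathtt{T},\mathtt{C},\mathtt{G}\}^n$. Then $\mathcal{C}$ is a $\kappa$-WMU code, $\mathcal{C}$ is balanced, and the minimum Hamming distance of $\mathcal{C}$ is at least $d$.
   Context: $\Psi(\mathbf{a},\mathbf{b})=(c_1,\dots,c_n)$ with $c_i=\mathtt{A},\mathtt{T},\mathtt{C},\mathtt{G}$ according as $(a_i,b_i)=(0,0),(0,1),(1,0),(1,1)$. A binary sequence of length $n$ is balanced if exactly $n/2$ entries are $1$; a DNA sequence of length $n$ is balanced if exactly $n/2$ entries lie in $\{\mathtt{G},\mathtt{C}\}$; a code is balanced if every codeword is. A code $\mathcal{C}$ of length $n$ is $\kappa$-WMU if for all not necessarily distinct $\mathbf{a},\mathbf{b}\in\mathcal{C}$ and all $\kappa\le l<n$, $(a_1,\dots,a_l)\ne(b_{n-l+1},\dots,b_n)$. *)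

theory Defs
  imports Main
begin

text \<open>Binary symbols: False = 0, True = 1.\<close>

datatype nuc = NA | NT | NC | NG

definition psi_sym :: "bool \<Rightarrow> bool \<Rightarrow> nuc" where
  "psi_sym x y = (if \<not> x \<and> \<not> y then NA else if \<not> x \<and> y then NT
                  else if x \<and> \<not> y then NC else NG)"

definition Psi :: "bool list \<Rightarrow> bool list \<Rightarrow> nuc list" where
  "Psi a b = map (\<lambda>(x, y). psi_sym x y) (zip a b)"

definition hamming :: "'a list \<Rightarrow> 'a list \<Rightarrow> nat" where
  "hamming x y = card {i. i < length x \<and> x ! i \<noteq> y ! i}"

definition min_dist_ge :: "'a list set \<Rightarrow> nat \<Rightarrow> bool" where
  "min_dist_ge Cd d = (\<forall>x\<in>Cd. \<forall>y\<in>Cd. x \<noteq> y \<longrightarrow> d \<le> hamming x y)"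

definition code_of_length :: "nat \<Rightarrow> 'a list set \<Rightarrow> bool" where
  "code_of_length n Cd = (\<forall>x\<in>Cd. length x = n)"

definition balanced_bin :: "bool list \<Rightarrow> bool" where
  "balanced_bin a = (2 * length (filter id a) = length a)"

definition balanced_dna :: "nuc list \<Rightarrow> bool" where
  "balanced_dna c = (2 * length (filter (\<lambda>s. s \<in> {NG, NC}) c) = length c)"

definition WMU :: "nat \<Rightarrow> nat \<Rightarrow> 'a list set \<Rightarrow> bool" where
  "WMU \<kappa> n Cd = (\<forall>a\<in>Cd. \<forall>b\<in>Cd. \<forall>l. \<kappa> \<le> l \<and> l < n \<longrightarrow> take l a \<noteq> drop (n - l) b)"

end

theory Submission
  imports Defs
begin

text \<open>\<open>\<Psi>\<close> is a position-wise bijection \<open>bool \<times> bool \<rightarrow> nuc\<close> whose first component decides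
  membership in \<open>{G, C}\<close>. Hence \<open>\<Psi>\<close> commutes with \<open>take\<close> and \<open>drop\<close>, is injective on pairs of
  equal length, records the weight of its first argument as the GC-content, and every position
  where either argument differs is a position where the images differ. The three properties of
  the product code follow componentwise from the WMU property of \<open>C\<^sub>2\<close>, the balance of \<open>C\<^sub>1\<close>
  and the minimum distances of the component differing between two distinct codewords.\<close>

lemma psi_sym_eq_iff: "psi_sym x y = psi_sym x' y' \<longleftrightarrow> x = x' \<and> y = y'"
  by (auto simp: psi_sym_def split: if_splits)

lemma length_Psi [simp]: "length (Psi a b) = min (length a) (length b)"
  by (simp add: Psi_def)

lemma nth_Psi: "i < length a \<Longrightarrow> i < length b \<Longrightarrow> Psi a b ! i = psi_sym (a ! i) (b ! i)"
  by (simp add: Psi_def)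

lemma take_Psi: "take l (Psi a b) = Psi (take l a) (take l b)"
  by (simp add: Psi_def take_map take_zip)

lemma drop_Psi: "drop l (Psi a b) = Psi (drop l a) (drop l b)"
  by (simp add: Psi_def drop_map drop_zip)

lemma Psi_eq_iff:
  assumes "length b = length a" and "length a' = length a" and "length b' = length a"
  shows "Psi a b = Psi a' b' \<longleftrightarrow> a = a' \<and> b = b'"
proof
  assume eq: "Psi a b = Psi a' b'"
  have "a ! i = a' ! i \<and> b ! i = b' ! i" if "i < length a" for i
  proof -
    have "Psi a b ! i = Psi a' b' ! i" using eq by simp
    with that assms show ?thesis by (simp add: nth_Psi psi_sym_eq_iff)
  qed
  with assms show "a = a' \<and> b = b'" by (auto intro: nth_equalityI)
qed simp

lemma length_filter_GC_Psi:
  "length b = length a \<Longrightarrow> length (filter (\<lambda>s. s \<in> {NG, NC}) (Psi a b)) = length (filter id a)"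
proof (induction a arbitrary: b)
  case Nil
  then show ?case by (simp add: Psi_def)
next
  case (Cons x a)
  then obtain y b' where "b = y # b'" by (cases b) auto
  with Cons show ?case by (simp add: Psi_def psi_sym_def)
qed

lemma balanced_dna_Psi: "length b = length a \<Longrightarrow> balanced_bin a \<Longrightarrow> balanced_dna (Psi a b)"
  unfolding balanced_dna_def balanced_bin_def by (subst length_filter_GC_Psi) simp_all

lemma hamming_le_hamming_Psi:
  assumes "length a = n" "length b = n" "length a' = n" "length b' = n"
  shows "hamming a a' \<le> hamming (Psi a b) (Psi a' b')"
    and "hamming b b' \<le> hamming (Psi a b) (Psi a' b')"
proof -
  let ?D = "{i. i < length (Psi a b) \<and> Psi a b ! i \<noteq> Psi a' b' ! i}"
  have "{i. i < length a \<and> a ! i \<noteq> a' ! i} \<subseteq> ?D"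
    and "{i. i < length b \<and> b ! i \<noteq> b' ! i} \<subseteq> ?D"
    using assms by (auto simp: nth_Psi psi_sym_eq_iff)
  then show "hamming a a' \<le> hamming (Psi a b) (Psi a' b')"
    and "hamming b b' \<le> hamming (Psi a b) (Psi a' b')"
    unfolding hamming_def by (auto intro: card_mono)
qed

lemma WMU_Psi_image:
  assumes "code_of_length n C1" "code_of_length n C2" "WMU \<kappa> n C2"
  shows "WMU \<kappa> n ((\<lambda>(a, b). Psi a b) ` (C1 \<times> C2))"
  unfolding WMU_def
proof clarify
  fix a b a' b' l
  assume mem: "a \<in> C1" "b \<in> C2" "a' \<in> C1" "b' \<in> C2" and l: "\<kappa> \<le> l" "l < n"
    and "take l (Psi a b) = drop (n - l) (Psi a' b')"
  then have "Psi (take l a) (take l b) = Psi (drop (n - l) a') (drop (n - l) b')"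
    by (simp add: take_Psi drop_Psi)
  with mem l assms(1,2) have "take l b = drop (n - l) b'"
    by (subst (asm) Psi_eq_iff) (auto simp: code_of_length_def)
  with mem l assms(3) show False unfolding WMU_def by blast
qed

lemma min_dist_ge_Psi_image:
  assumes "code_of_length n C1" "code_of_length n C2" "min_dist_ge C1 d" "min_dist_ge C2 d"
  shows "min_dist_ge ((\<lambda>(a, b). Psi a b) ` (C1 \<times> C2)) d"
  unfolding min_dist_ge_def
proof clarify
  fix a b a' b'
  assume mem: "a \<in> C1" "b \<in> C2" "a' \<in> C1" "b' \<in> C2" and ne: "Psi a b \<noteq> Psi a' b'"
  have lengths: "length a = n" "length b = n" "length a' = n" "length b' = n"
    using mem assms(1,2) by (auto simp: code_of_length_def)
  note le = hamming_le_hamming_Psi[OF lengths]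
  show "d \<le> hamming (Psi a b) (Psi a' b')"
  proof (cases "a = a'")
    case True
    with ne have "b \<noteq> b'" by auto
    with mem assms(4) le(2) show ?thesis unfolding min_dist_ge_def by (meson le_trans)
  next
    case False
    with mem assms(3) le(1) show ?thesis unfolding min_dist_ge_def by (meson le_trans)
  qed
qed

theorem lemma6:
  fixes n \<kappa> d :: nat and C1 C2 :: "bool list set"
  assumes "even n" and "1 \<le> \<kappa>" and "\<kappa> < n" and "1 \<le> d"
    and "code_of_length n C1" and "\<forall>a\<in>C1. balanced_bin a" and "min_dist_ge C1 d"
    and "\<forall>C'. code_of_length n C' \<and> (\<forall>a\<in>C'. balanced_bin a) \<and> min_dist_ge C' d
              \<longrightarrow> card C' \<le> card C1"
    and "code_of_length n C2" and "WMU \<kappa> n C2" and "min_dist_ge C2 d"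
  shows "WMU \<kappa> n ((\<lambda>(a, b). Psi a b) ` (C1 \<times> C2))
       \<and> (\<forall>c\<in>(\<lambda>(a, b). Psi a b) ` (C1 \<times> C2). balanced_dna c)
       \<and> min_dist_ge ((\<lambda>(a, b). Psi a b) ` (C1 \<times> C2)) d"
proof (intro conjI)
  show "WMU \<kappa> n ((\<lambda>(a, b). Psi a b) ` (C1 \<times> C2))"
    using assms(5,9,10) by (rule WMU_Psi_image)
  show "\<forall>c\<in>(\<lambda>(a, b). Psi a b) ` (C1 \<times> C2). balanced_dna c"
    using assms(5,6,9) by (auto simp: code_of_length_def intro: balanced_dna_Psi)
  show "min_dist_ge ((\<lambda>(a, b). Psi a b) ` (C1 \<times> C2)) d"
    using assms(5,9,7,11) by (rule min_dist_ge_Psi_image)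
qed

end
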